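(* Assume volume control with constants $\alpha,C_L,C_U$. Let $R\ge1$, let $\mathcal P$ be a covering of radius $R$ with overlap constant $b_\Gamma$, and let $\mathcal P'$ be a covering of radius $R'$ with $R'\le C_0R$ for some $C_0>0$. Let $u:A\to(0,\infty)$ be any positive function on a finite nonempty $A\subset\mathbb V$ (e.g. the landscape function). Then for every $E>0$, $$N_u^{\mathcal P,A}(E)\le(1+C_0)^\alpha C_\Gamma b_\Gamma\,N_u^{\mathcal P',A}(E),$$ where $C_\Gamma=2^\alpha C_U/C_L$.
   Context: $\Gamma=(\mathbb V,\mathcal E)$ is a connected simple unweighted graph with countably infinite vertex set, $d_0$ its shortest-path metric, $B(x,r)=\{y:d_0(x,y)\le r\}$. Volume control: $C_Lr^\alpha\le|B(x,r)|\le C_Ur^\alpha$ for all $x$, $r\ge1$, with $\alpha\ge1$. A covering of radius $R$ is a family $\mathcal P=\{B(z_i,R)\}_i$ with union $\mathbb V$; overlap constant $b$ means every point lies in at most $b$ of its balls. For finite $A$, $\mathcal P|_A=\{B\in\mathcal P:B\cap A\ne\emptyset\}$ and $N_u^{\mathcal P,A}(E)=|A|^{-1}\#\{B\in\mathcal P|_A:\min_{x\in B\cap A}1/u(x)\le E\}$. *)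

theory Defs
  imports Complex_Main "HOL-Library.Countable_Set"
begin

definition simple_graph :: "('a \<Rightarrow> 'a \<Rightarrow> bool) \<Rightarrow> bool" where
  "simple_graph G \<longleftrightarrow> (\<forall>x y. G x y \<longrightarrow> G y x) \<and> (\<forall>x. \<not> G x x)"

definition connected_graph :: "('a \<Rightarrow> 'a \<Rightarrow> bool) \<Rightarrow> bool" where
  "connected_graph G \<longleftrightarrow> (\<forall>x y. G\<^sup>*\<^sup>* x y)"

definition gdist :: "('a \<Rightarrow> 'a \<Rightarrow> bool) \<Rightarrow> 'a \<Rightarrow> 'a \<Rightarrow> nat" where
  "gdist G x y = (LEAST n. (G ^^ n) x y)"

definition gball :: "('a \<Rightarrow> 'a \<Rightarrow> bool) \<Rightarrow> 'a \<Rightarrow> real \<Rightarrow> 'a set" where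
  "gball G x r = {y. real (gdist G x y) \<le> r}"

definition volume_control :: "('a \<Rightarrow> 'a \<Rightarrow> bool) \<Rightarrow> real \<Rightarrow> real \<Rightarrow> real \<Rightarrow> bool" where
  "volume_control G \<alpha> CL CU \<longleftrightarrow>
     (\<forall>x. \<forall>r\<ge>1. finite (gball G x r) \<and>
        CL * r powr \<alpha> \<le> real (card (gball G x r)) \<and>
        real (card (gball G x r)) \<le> CU * r powr \<alpha>)"

definition is_covering :: "('a \<Rightarrow> 'a \<Rightarrow> bool) \<Rightarrow> real \<Rightarrow> 'a set set \<Rightarrow> bool" where
  "is_covering G R P \<longleftrightarrow> (\<forall>B\<in>P. \<exists>z. B = gball G z R) \<and> \<Union>P = UNIV"

definition overlap_bounded :: "'a set set \<Rightarrow> real \<Rightarrow> bool" where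
  "overlap_bounded P b \<longleftrightarrow> (\<forall>x. finite {B\<in>P. x \<in> B} \<and> real (card {B\<in>P. x \<in> B}) \<le> b)"

definition restrict_cover :: "'a set set \<Rightarrow> 'a set \<Rightarrow> 'a set set" where
  "restrict_cover P A = {B\<in>P. B \<inter> A \<noteq> {}}"

definition count_fn :: "('a \<Rightarrow> real) \<Rightarrow> 'a set set \<Rightarrow> 'a set \<Rightarrow> real \<Rightarrow> real" where
  "count_fn u P A E =
     real (card {B\<in>restrict_cover P A. Min ((\<lambda>x. 1 / u x) ` (B \<inter> A)) \<le> E}) / real (card A)"

end

theory Submission imports Defs begin

text \<open>
  Every ball of \<open>\<P>\<close> that contains a point of \<open>S = {x \<in> A. 1 / u x \<le> E}\<close> meets a ball
  \<open>B'\<close> of \<open>\<P>'\<close> that also contains that point. All balls of \<open>\<P>\<close> meeting \<open>B'\<close> lie in the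
  concentric ball of radius \<open>2R + R' \<le> 2(1 + C\<^sub>0)R\<close>; each has volume at least \<open>C\<^sub>L R\<^sup>\<alpha>\<close> and
  every point lies in at most \<open>b\<close> of them, so by double counting there are at most
  \<open>b C\<^sub>U (2(1 + C\<^sub>0)R)\<^sup>\<alpha> / (C\<^sub>L R\<^sup>\<alpha>)\<close> of them. Summing over the balls of \<open>\<P>'\<close> meeting \<open>S\<close>
  gives the claim.
\<close>


lemma relpowp_sym:
  assumes "\<And>x y. G x y \<Longrightarrow> G y x"
  shows "(G ^^ n) x y \<Longrightarrow> (G ^^ n) y x"
proof (induction n arbitrary: x y)
  case 0
  then show ?case by simp
next
  case (Suc n)
  then obtain w where "(G ^^ n) x w" "G w y" by auto
  then have "G y w" "(G ^^ n) w x" using Suc.IH assms by auto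
  then show ?case by (rule relpowp_Suc_I2)
qed

lemma relpowp_gdist:
  assumes "connected_graph G"
  shows "(G ^^ gdist G x y) x y"
proof -
  have "G\<^sup>*\<^sup>* x y" using assms unfolding connected_graph_def by simp
  then obtain n where "(G ^^ n) x y" using rtranclp_imp_relpowp by metis
  then show ?thesis unfolding gdist_def by (rule LeastI)
qed

lemma gdist_le: "(G ^^ n) x y \<Longrightarrow> gdist G x y \<le> n"
  unfolding gdist_def by (rule Least_le)

lemma gdist_self: "gdist G x x = 0"
  using gdist_le[of 0 G x x] by simp

lemma gdist_commute:
  assumes "simple_graph G" "connected_graph G"
  shows "gdist G x y = gdist G y x"
proof -
  have sym: "\<And>x y. G x y \<Longrightarrow> G y x" using assms(1) unfolding simple_graph_def by simp
  have "gdist G y x \<le> gdist G x y" for x y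
    by (rule gdist_le[OF relpowp_sym[OF sym relpowp_gdist[OF assms(2)]]])
  then show ?thesis by (simp add: order_antisym)
qed

lemma gdist_triangle:
  assumes "connected_graph G"
  shows "gdist G x z \<le> gdist G x y + gdist G y z"
proof -
  have "(G ^^ (gdist G x y + gdist G y z)) x z"
    unfolding relpowp_add
    using relpowp_gdist[OF assms, of x y] relpowp_gdist[OF assms, of y z] by (rule relcomppI)
  then show ?thesis by (rule gdist_le)
qed

lemma gball_subset_if_meets:
  assumes "simple_graph G" "connected_graph G"
    and "x \<in> gball G z R" "x \<in> gball G z' r"
  shows "gball G z R \<subseteq> gball G z' (r + 2 * R)"
proof
  fix y assume "y \<in> gball G z R"
  moreover have "gdist G z' y \<le> gdist G z' x + gdist G z x + gdist G z y"
    using gdist_triangle[OF assms(2), of z' y x] gdist_triangle[OF assms(2), of x y z]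
      gdist_commute[OF assms(1,2), of x z] by linarith
  ultimately show "y \<in> gball G z' (r + 2 * R)"
    using assms(3,4) unfolding gball_def by simp
qed


lemma is_covering_radius_nonneg:
  assumes "is_covering G R P"
  shows "0 \<le> R"
proof -
  obtain B where "B \<in> P" "undefined \<in> B" using assms unfolding is_covering_def by blast
  then obtain z where "real (gdist G z undefined) \<le> R"
    using assms unfolding is_covering_def gball_def by blast
  then show ?thesis by (meson of_nat_0_le_iff order_trans)
qed

lemma overlap_bounded_nonneg:
  assumes "overlap_bounded P b"
  shows "0 \<le> b"
  using assms unfolding overlap_bounded_def by (meson of_nat_0_le_iff order_trans)

lemma overlap_bounded_subset:
  assumes "Q \<subseteq> P" "overlap_bounded P b"
  shows "overlap_bounded Q b"
  unfolding overlap_bounded_def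
proof
  fix y
  have sub: "{B\<in>Q. y \<in> B} \<subseteq> {B\<in>P. y \<in> B}" using assms(1) by blast
  have "finite {B\<in>P. y \<in> B}" "real (card {B\<in>P. y \<in> B}) \<le> b"
    using assms(2) unfolding overlap_bounded_def by auto
  then show "finite {B\<in>Q. y \<in> B} \<and> real (card {B\<in>Q. y \<in> B}) \<le> b"
    using finite_subset[OF sub] card_mono[OF _ sub] by (meson of_nat_le_iff order_trans)
qed

lemma sum_card_le_overlap:
  fixes T :: "'a set set"
  assumes "finite W" "T \<subseteq> Pow W" "overlap_bounded T b"
  shows "finite T" "(\<Sum>B\<in>T. real (card B)) \<le> b * real (card W)"
proof -
  show finT: "finite T" using assms(1,2) by (meson finite_Pow_iff finite_subset)
  have "(\<Sum>B\<in>T. card B) = (\<Sum>B\<in>T. card {y\<in>W. y \<in> B})"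
    using assms(2) by (intro sum.cong) (auto intro: arg_cong[where f = card])
  also have "\<dots> = (\<Sum>y\<in>W. card {B\<in>T. y \<in> B})"
    by (rule sum_multicount_gen[OF finT assms(1)]) simp
  finally have "(\<Sum>B\<in>T. real (card B)) = (\<Sum>y\<in>W. real (card {B\<in>T. y \<in> B}))"
    by (simp only: of_nat_sum[symmetric])
  also have "\<dots> \<le> (\<Sum>y\<in>W. b)"
    using assms(3) unfolding overlap_bounded_def by (intro sum_mono) blast
  also have "\<dots> = b * real (card W)" by (simp add: mult.commute)
  finally show "(\<Sum>B\<in>T. real (card B)) \<le> b * real (card W)" .
qed

lemma card_covering_balls_meeting_gball:
  fixes z :: 'a
  assumes "simple_graph G" "connected_graph G" "volume_control G \<alpha> CL CU"
    and "R \<ge> 1" "is_covering G R P" "overlap_bounded P b" "r \<ge> 0"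
  defines "T \<equiv> {B\<in>P. B \<inter> gball G z r \<noteq> {}}"
  shows "finite T" "real (card T) * (CL * R powr \<alpha>) \<le> b * (CU * (r + 2 * R) powr \<alpha>)"
proof -
  have vol: "finite (gball G x \<rho>) \<and> CL * \<rho> powr \<alpha> \<le> real (card (gball G x \<rho>))
      \<and> real (card (gball G x \<rho>)) \<le> CU * \<rho> powr \<alpha>" if "\<rho> \<ge> 1" for x \<rho>
    using assms(3) that unfolding volume_control_def by blast
  define W where "W = gball G z (r + 2 * R)"
  have "r + 2 * R \<ge> 1" using assms(4,7) by linarith
  then have "finite W" and card_W: "real (card W) \<le> CU * (r + 2 * R) powr \<alpha>"
    using vol unfolding W_def by blast+
  have ball_T: "\<exists>c. B = gball G c R" if "B \<in> T" for B
    using that assms(5) unfolding T_def is_covering_def by blast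
  have T_sub: "B \<in> Pow W" if B: "B \<in> T" for B
  proof -
    obtain c where c: "B = gball G c R" using ball_T[OF B] by blast
    obtain x where "x \<in> B" "x \<in> gball G z r" using B unfolding T_def by blast
    then have "gball G c R \<subseteq> gball G z (r + 2 * R)"
      using gball_subset_if_meets[OF assms(1,2)] c by blast
    then show ?thesis unfolding W_def c by simp
  qed
  have "T \<subseteq> Pow W" using T_sub by blast
  moreover have "overlap_bounded T b"
    using overlap_bounded_subset[of T P b] assms(6) unfolding T_def by blast
  ultimately have "finite T" and double_count: "(\<Sum>B\<in>T. real (card B)) \<le> b * real (card W)"
    using sum_card_le_overlap[OF \<open>finite W\<close>] by blast+
  then show "finite T" by blast
  have "CL * R powr \<alpha> \<le> real (card B)" if "B \<in> T" for B
    using ball_T[OF that] vol[OF assms(4)] by blast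
  then have "real (card T) * (CL * R powr \<alpha>) \<le> (\<Sum>B\<in>T. real (card B))"
    using sum_mono[of T "\<lambda>_. CL * R powr \<alpha>"] by (simp add: mult.commute)
  also have "\<dots> \<le> b * real (card W)" by (fact double_count)
  also have "\<dots> \<le> b * (CU * (r + 2 * R) powr \<alpha>)"
    using card_W overlap_bounded_nonneg[OF assms(6)] by (rule mult_left_mono)
  finally show "real (card T) * (CL * R powr \<alpha>) \<le> b * (CU * (r + 2 * R) powr \<alpha>)" .
qed

lemma powr_radius_sum_le:
  fixes R r C0 \<alpha> :: real
  assumes "R > 0" "0 \<le> r" "r \<le> C0 * R" "\<alpha> \<ge> 0"
  shows "(r + 2 * R) powr \<alpha> \<le> (1 + C0) powr \<alpha> * 2 powr \<alpha> * R powr \<alpha>"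
proof -
  have "0 \<le> C0 * R" using assms(2,3) by linarith
  then have "C0 \<ge> 0" using assms(1) by (simp add: zero_le_mult_iff)
  have "(r + 2 * R) powr \<alpha> \<le> ((1 + C0) * 2 * R) powr \<alpha>"
    using assms by (intro powr_mono2) (auto simp: algebra_simps)
  also have "\<dots> = ((1 + C0) * 2) powr \<alpha> * R powr \<alpha>"
    using \<open>C0 \<ge> 0\<close> assms(1) by (intro powr_mult)
  also have "\<dots> = (1 + C0) powr \<alpha> * 2 powr \<alpha> * R powr \<alpha>"
    using \<open>C0 \<ge> 0\<close> by (subst powr_mult) auto
  finally show ?thesis .
qed

lemma card_covering_balls_meeting_smaller_gball:
  fixes z :: 'a
  assumes "simple_graph G" "connected_graph G" "volume_control G \<alpha> CL CU"
    and "\<alpha> \<ge> 0" "CL > 0" "CU \<ge> 0"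
    and "R \<ge> 1" "is_covering G R P" "overlap_bounded P b" "0 \<le> r" "r \<le> C0 * R"
  defines "T \<equiv> {B\<in>P. B \<inter> gball G z r \<noteq> {}}"
  shows "finite T" "real (card T) \<le> (1 + C0) powr \<alpha> * (2 powr \<alpha> * CU / CL) * b"
proof -
  note count = card_covering_balls_meeting_gball[OF assms(1-3,7-10), of z, folded T_def]
  show "finite T" by (fact count(1))
  have "b * CU \<ge> 0" using overlap_bounded_nonneg[OF assms(9)] assms(6) by simp
  then have "b * CU * (r + 2 * R) powr \<alpha> \<le> b * CU * ((1 + C0) powr \<alpha> * 2 powr \<alpha> * R powr \<alpha>)"
    using powr_radius_sum_le[of R r C0 \<alpha>] assms(4,7,10,11) by (intro mult_left_mono) auto
  with count(2) have "real (card T) * (CL * R powr \<alpha>)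
      \<le> ((1 + C0) powr \<alpha> * (2 powr \<alpha> * CU / CL) * b) * (CL * R powr \<alpha>)"
    using assms(5) by (simp add: field_simps)
  moreover have "CL * R powr \<alpha> > 0" using assms(5,7) by simp
  ultimately show "real (card T) \<le> (1 + C0) powr \<alpha> * (2 powr \<alpha> * CU / CL) * b"
    by (rule mult_right_le_imp_le)
qed

lemma finite_covering_balls_meeting_finite:
  assumes "simple_graph G" "connected_graph G" "volume_control G \<alpha> CL CU"
    and "is_covering G r P" "finite S"
  shows "finite {B\<in>P. B \<inter> S \<noteq> {}}"
proof -
  have "r \<ge> 0" by (rule is_covering_radius_nonneg[OF assms(4)])
  define U where "U = (\<Union>x\<in>S. gball G x (2 * r + 1))"
  have "finite (gball G x (2 * r + 1))" for x
    using assms(3) \<open>r \<ge> 0\<close> unfolding volume_control_def by simp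
  then have "finite U" unfolding U_def using assms(5) by (intro finite_UN_I)
  moreover have "{B\<in>P. B \<inter> S \<noteq> {}} \<subseteq> Pow U"
  proof
    fix B assume "B \<in> {B\<in>P. B \<inter> S \<noteq> {}}"
    then obtain z x where B: "B = gball G z r" and "x \<in> B" "x \<in> S"
      using assms(4) unfolding is_covering_def by blast
    have "x \<in> gball G x 0" by (simp add: gball_def gdist_self)
    with \<open>x \<in> B\<close> have "B \<subseteq> gball G x (0 + 2 * r)"
      unfolding B by (rule gball_subset_if_meets[OF assms(1,2)])
    also have "\<dots> \<subseteq> gball G x (2 * r + 1)" unfolding gball_def by auto
    also have "\<dots> \<subseteq> U" unfolding U_def using \<open>x \<in> S\<close> by (rule UN_upper)
    finally show "B \<in> Pow U" by simp
  qed
  ultimately show ?thesis by (meson finite_Pow_iff finite_subset)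
qed


lemma card_meeting_le_via_cover:
  fixes P P' :: "'a set set"
  assumes "S \<subseteq> \<Union>P'" "finite {B'\<in>P'. B' \<inter> S \<noteq> {}}"
    and "\<And>B'. B' \<in> P' \<Longrightarrow> B' \<inter> S \<noteq> {} \<Longrightarrow>
           finite {B\<in>P. B \<inter> B' \<noteq> {}} \<and> real (card {B\<in>P. B \<inter> B' \<noteq> {}}) \<le> M"
  shows "real (card {B\<in>P. B \<inter> S \<noteq> {}}) \<le> M * real (card {B'\<in>P'. B' \<inter> S \<noteq> {}})"
proof -
  define Q' where "Q' = {B'\<in>P'. B' \<inter> S \<noteq> {}}"
  have "{B\<in>P. B \<inter> S \<noteq> {}} \<subseteq> (\<Union>B'\<in>Q'. {B\<in>P. B \<inter> B' \<noteq> {}})"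
  proof
    fix B assume "B \<in> {B\<in>P. B \<inter> S \<noteq> {}}"
    then obtain x where "B \<in> P" "x \<in> B" "x \<in> S" by blast
    moreover obtain B' where "B' \<in> P'" "x \<in> B'" using assms(1) \<open>x \<in> S\<close> by blast
    ultimately show "B \<in> (\<Union>B'\<in>Q'. {B\<in>P. B \<inter> B' \<noteq> {}})" unfolding Q'_def by blast
  qed
  then have "card {B\<in>P. B \<inter> S \<noteq> {}} \<le> card (\<Union>B'\<in>Q'. {B\<in>P. B \<inter> B' \<noteq> {}})"
    using assms(2,3) unfolding Q'_def by (intro card_mono) auto
  also have "\<dots> \<le> (\<Sum>B'\<in>Q'. card {B\<in>P. B \<inter> B' \<noteq> {}})"
    by (rule card_UN_le) (simp add: Q'_def assms(2))
  finally have "real (card {B\<in>P. B \<inter> S \<noteq> {}}) \<le> (\<Sum>B'\<in>Q'. real (card {B\<in>P. B \<inter> B' \<noteq> {}}))"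
    by (simp only: of_nat_sum[symmetric] of_nat_le_iff)
  also have "\<dots> \<le> (\<Sum>B'\<in>Q'. M)" using assms(3) unfolding Q'_def by (intro sum_mono) auto
  finally show ?thesis unfolding Q'_def by (simp add: mult.commute)
qed

lemma count_fn_eq:
  assumes "finite A"
  shows "count_fn u P A E = real (card {B\<in>P. B \<inter> {x\<in>A. 1 / u x \<le> E} \<noteq> {}}) / real (card A)"
proof -
  have "Min ((\<lambda>x. 1 / u x) ` (B \<inter> A)) \<le> E \<longleftrightarrow> (\<exists>x\<in>B \<inter> A. 1 / u x \<le> E)"
    if "B \<inter> A \<noteq> {}" for B
    using that assms by (subst Min_le_iff) auto
  then have "{B\<in>restrict_cover P A. Min ((\<lambda>x. 1 / u x) ` (B \<inter> A)) \<le> E}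
           = {B\<in>P. B \<inter> {x\<in>A. 1 / u x \<le> E} \<noteq> {}}"
    unfolding restrict_cover_def by auto
  then show ?thesis unfolding count_fn_def by simp
qed

theorem lemma2p3:
  fixes G :: "'a \<Rightarrow> 'a \<Rightarrow> bool"
    and \<alpha> CL CU R R' C0 b E :: real
    and P P' :: "'a set set"
    and u :: "'a \<Rightarrow> real"
    and A :: "'a set"
  assumes "simple_graph G" and "connected_graph G"
    and "countable (UNIV :: 'a set)" and "infinite (UNIV :: 'a set)"
    and "\<alpha> \<ge> 1" and "CL > 0" and "CU > 0"
    and "volume_control G \<alpha> CL CU"
    and "R \<ge> 1"
    and "is_covering G R P" and "overlap_bounded P b"
    and "is_covering G R' P'" and "C0 > 0" and "R' \<le> C0 * R"
    and "finite A" and "A \<noteq> {}" and "\<forall>x\<in>A. u x > 0"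
    and "E > 0"
  shows "count_fn u P A E \<le> (1 + C0) powr \<alpha> * (2 powr \<alpha> * CU / CL) * b * count_fn u P' A E"
proof -
  define S where "S = {x\<in>A. 1 / u x \<le> E}"
  define M where "M = (1 + C0) powr \<alpha> * (2 powr \<alpha> * CU / CL) * b"
  have balls_meeting_P'_ball:
    "finite {B\<in>P. B \<inter> B' \<noteq> {}} \<and> real (card {B\<in>P. B \<inter> B' \<noteq> {}}) \<le> M" if "B' \<in> P'" for B'
  proof -
    obtain z' where "B' = gball G z' R'" using \<open>B' \<in> P'\<close> assms(12) unfolding is_covering_def by blast
    moreover have "\<alpha> \<ge> 0" "CU \<ge> 0" using assms(5,7) by simp_all
    ultimately show ?thesis
      using card_covering_balls_meeting_smaller_gball[OF assms(1,2,8) _ assms(6) _ assms(9-11)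
          is_covering_radius_nonneg[OF assms(12)] assms(14), of z']
      unfolding M_def by simp
  qed
  have "real (card {B\<in>P. B \<inter> S \<noteq> {}}) \<le> M * real (card {B'\<in>P'. B' \<inter> S \<noteq> {}})"
  proof (rule card_meeting_le_via_cover[OF _ _ balls_meeting_P'_ball])
    show "S \<subseteq> \<Union>P'" using assms(12) unfolding is_covering_def by simp
    show "finite {B'\<in>P'. B' \<inter> S \<noteq> {}}"
      using finite_covering_balls_meeting_finite[OF assms(1,2,8,12)] assms(15) unfolding S_def by simp
  qed
  then show ?thesis
    unfolding count_fn_eq[OF assms(15)] S_def[symmetric] M_def[symmetric]
    by (simp add: divide_right_mono)
qed

end
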